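(* Let $\mathbf m\in\mathbb C^d$ with $\operatorname{supp}(\widehat{\mathbf m})\subseteq[\rho]_0$, where $\rho<d/2$, so that $\widehat{\mathbf m}=(a_0e^{i\theta_0},\dots,a_{\rho-1}e^{i\theta_{\rho-1}},0,\dots,0)^T$ with $a_j,\theta_j\in\mathbb R$. Let $2\le\kappa\le\rho$ and $$\mu_1=\min_{|p|\le\kappa-1,\ q\in[d]_0}\left|\left(F_d(\widehat{\mathbf m}\circ S_p\overline{\widehat{\mathbf m}})\right)_q\right|.$$ If $|a_0|>(\rho-1)|a_1|$ and $|a_1|\ge|a_2|\ge\cdots\ge|a_{\rho-1}|>0$, then $\mu_1>0$.
   Context: Vectors in $\mathbb C^d$ are indexed by $[d]_0=\{0,1,\dots,d-1\}$, with all indices interpreted modulo $d$. $F_d$ is the DFT matrix $(F_d)_{j,k}=e^{-2\pi i jk/d}$ and $\widehat{\mathbf m}=F_d\mathbf m$. The shift is $(S_p\mathbf x)_n=x_{n+p}$; $\circ$ is the entrywise product and $\overline{\mathbf x}$ the entrywise conjugate; $\operatorname{supp}(\mathbf x)=\{n:x_n\neq0\}$. *)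

theory Defs
  imports Complex_Main
begin

text \<open>Vectors in C^d are functions nat => complex; only the entries with index < d matter,
  and all indices are taken modulo d.\<close>

definition dft :: "nat \<Rightarrow> (nat \<Rightarrow> complex) \<Rightarrow> (nat \<Rightarrow> complex)" where
  "dft d x = (\<lambda>j. \<Sum>k<d. exp (- 2 * pi * \<i> * of_nat j * of_nat k / of_nat d) * x k)"

definition shift :: "nat \<Rightarrow> int \<Rightarrow> (nat \<Rightarrow> complex) \<Rightarrow> (nat \<Rightarrow> complex)" where
  "shift d p x = (\<lambda>n. x (nat ((int n + p) mod int d)))"

definition hadamard :: "(nat \<Rightarrow> complex) \<Rightarrow> (nat \<Rightarrow> complex) \<Rightarrow> (nat \<Rightarrow> complex)" where
  "hadamard x y = (\<lambda>n. x n * y n)"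

definition vconj :: "(nat \<Rightarrow> complex) \<Rightarrow> (nat \<Rightarrow> complex)" where
  "vconj x = (\<lambda>n. cnj (x n))"

definition mu1 :: "nat \<Rightarrow> nat \<Rightarrow> (nat \<Rightarrow> complex) \<Rightarrow> real" where
  "mu1 d \<kappa> mh = Min {norm (dft d (hadamard mh (shift d p (vconj mh))) q) | p q.
      \<bar>p\<bar> \<le> int \<kappa> - 1 \<and> q < d}"

end

theory Submission
  imports Defs
begin

text \<open>Entry \<open>q\<close> of the transform of \<open>m\<^sup>^ \<circ> S\<^sub>p conj m\<^sup>^\<close> is a sum over \<open>k\<close> of twiddled
  products whose moduli are \<open>|a k| |a (k + p)|\<close>. Because \<open>2\<rho> < d\<close>, no shifted index wraps
  around into the support, so at most \<open>\<rho>\<close> summands are nonzero. For \<open>p \<ge> 0\<close> the summand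
  \<open>k = 0\<close> has modulus \<open>|a 0| |a p|\<close>, while by monotonicity each of the at most \<open>\<rho> - 1\<close>
  others is bounded by \<open>|a 1| |a p|\<close>; for \<open>p < 0\<close> the summand \<open>k = -p\<close> plays the same role.
  So one summand outweighs all the others together and the entry cannot vanish.\<close>

lemma sum_nonzero_if_dominant_term:
  fixes t :: "'i \<Rightarrow> 'a::real_normed_vector"
  assumes "finite K" "kz \<in> K"
    and vanish: "\<And>k. k \<in> K - {kz} \<Longrightarrow> k \<notin> A \<Longrightarrow> t k = 0"
    and bound: "\<And>k. k \<in> A \<Longrightarrow> norm (t k) \<le> c" "0 \<le> c"
    and "finite A" "card A \<le> n" "real n * c < norm (t kz)"
  shows "sum t K \<noteq> 0"
proof
  assume "sum t K = 0"
  moreover have "sum t K = t kz + sum t (K - {kz})"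
    using assms(1,2) by (simp add: sum.remove)
  ultimately have "norm (t kz) = norm (sum t (K - {kz}))"
    by (metis add_eq_0_iff norm_minus_cancel)
  also have "\<dots> \<le> (\<Sum>k\<in>K - {kz}. norm (t k))"
    by (rule norm_sum)
  also have "\<dots> = (\<Sum>k\<in>(K - {kz}) \<inter> A. norm (t k))"
    using assms(1) vanish by (intro sum.mono_neutral_right) auto
  also have "\<dots> \<le> real (card ((K - {kz}) \<inter> A)) * c"
    using sum_bounded_above[of "(K - {kz}) \<inter> A" "\<lambda>k. norm (t k)" c] bound by auto
  also have "\<dots> \<le> real n * c"
    using \<open>finite A\<close> \<open>card A \<le> n\<close> \<open>0 \<le> c\<close> card_mono[of A "(K - {kz}) \<inter> A"]
    by (intro mult_right_mono) auto
  finally show False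
    using assms(8) by simp
qed

lemma dft_hadamard_shift_vconj:
  "dft d (hadamard x (shift d p (vconj x))) q =
     (\<Sum>k<d. exp (- 2 * pi * \<i> * of_nat q * of_nat k / of_nat d)
              * (x k * cnj (x (nat ((int k + p) mod int d)))))"
  by (simp add: dft_def hadamard_def shift_def vconj_def)

lemma norm_dft_twiddle_mult:
  "norm (exp (- 2 * pi * \<i> * of_nat q * of_nat k / of_nat d) * z) = norm z"
  by (simp add: norm_mult norm_exp_eq_Re)

context
  fixes d \<rho> :: nat and x :: "nat \<Rightarrow> complex"
  assumes rho_le: "2 * \<rho> \<le> d"
    and supp: "\<And>k. \<rho> \<le> k \<Longrightarrow> k < d \<Longrightarrow> x k = 0"
    and nonzero: "\<And>k. k < \<rho> \<Longrightarrow> x k \<noteq> 0"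
    and antimono: "\<And>i j. i \<le> j \<Longrightarrow> j < \<rho> \<Longrightarrow> norm (x j) \<le> norm (x i)"
    and dominant: "real (\<rho> - 1) * norm (x 1) < norm (x 0)"
begin

lemma correlation_nonzero_nonneg_shift:
  assumes "P < \<rho>"
  shows "dft d (hadamard x (shift d (int P) (vconj x))) q \<noteq> 0"
proof -
  define t where "t k = exp (- 2 * pi * \<i> * of_nat q * of_nat k / of_nat d)
                         * (x k * cnj (x (k + P)))" for k
  have "dft d (hadamard x (shift d (int P) (vconj x))) q = (\<Sum>k<d. t k)"
    unfolding dft_hadamard_shift_vconj t_def
  proof (intro sum.cong refl)
    fix k assume "k \<in> {..<d}"
    then show "exp (- 2 * pi * \<i> * of_nat q * of_nat k / of_nat d)
                 * (x k * cnj (x (nat ((int k + int P) mod int d))))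
             = exp (- 2 * pi * \<i> * of_nat q * of_nat k / of_nat d) * (x k * cnj (x (k + P)))"
      using assms rho_le supp[of k] by (cases "k < \<rho>") (auto simp: nat_add_distrib)
  qed
  moreover have "(\<Sum>k<d. t k) \<noteq> 0"
  proof (rule sum_nonzero_if_dominant_term[where kz = 0 and A = "{1..<\<rho>}" and n = "\<rho> - 1"
        and c = "norm (x 1) * norm (x P)"])
    show "norm (t k) \<le> norm (x 1) * norm (x P)" if "k \<in> {1..<\<rho>}" for k
    proof -
      have "norm (x (k + P)) \<le> norm (x P)"
        using antimono[of P "k + P"] supp[of "k + P"] assms rho_le that
        by (cases "k + P < \<rho>") auto
      then show ?thesis
        using antimono[of 1 k] that
        by (simp add: t_def norm_dft_twiddle_mult norm_mult mult_mono)
    qed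
    have "real (\<rho> - 1) * (norm (x 1) * norm (x P)) < norm (x 0) * norm (x P)"
      using dominant nonzero[OF assms] by (simp add: mult.assoc[symmetric])
    then show "real (\<rho> - 1) * (norm (x 1) * norm (x P)) < norm (t 0)"
      by (simp add: t_def norm_dft_twiddle_mult norm_mult)
  qed (use rho_le assms supp in \<open>auto simp: t_def\<close>)
  ultimately show ?thesis
    by simp
qed

lemma correlation_nonzero_neg_shift:
  assumes "1 \<le> S" "S < \<rho>"
  shows "dft d (hadamard x (shift d (- int S) (vconj x))) q \<noteq> 0"
proof -
  define t where "t k = exp (- 2 * pi * \<i> * of_nat q * of_nat k / of_nat d)
                         * (x k * cnj (x (if k < S then d + k - S else k - S)))" for k
  have "nat ((int k - int S) mod int d) = (if k < S then d + k - S else k - S)" if "k < d" for k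
  proof (cases "k < S")
    case True
    have "(int k - int S) mod int d = (int k - int S + int d) mod int d"
      by simp
    also have "\<dots> = int k - int S + int d"
      using True assms rho_le by (intro mod_pos_pos_trivial) auto
    finally show ?thesis
      using True assms rho_le by simp
  qed (use that in \<open>auto simp: of_nat_diff\<close>)
  then have "dft d (hadamard x (shift d (- int S) (vconj x))) q = (\<Sum>k<d. t k)"
    unfolding dft_hadamard_shift_vconj t_def by (intro sum.cong) auto
  moreover have "(\<Sum>k<d. t k) \<noteq> 0"
  proof (rule sum_nonzero_if_dominant_term[where kz = S and A = "{S<..<\<rho>}" and n = "\<rho> - 1"
        and c = "norm (x S) * norm (x 1)"])
    show "norm (t k) \<le> norm (x S) * norm (x 1)" if "k \<in> {S<..<\<rho>}" for k
    proof -
      have "norm (x k) * norm (x (k - S)) \<le> norm (x S) * norm (x 1)"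
        using antimono[of S k] antimono[of 1 "k - S"] that by (intro mult_mono) auto
      then show ?thesis
        using that by (simp add: t_def norm_dft_twiddle_mult norm_mult)
    qed
    have "real (\<rho> - 1) * (norm (x S) * norm (x 1)) < norm (x S) * norm (x 0)"
      using dominant nonzero[OF assms(2)] by (simp add: mult.left_commute)
    then show "real (\<rho> - 1) * (norm (x S) * norm (x 1)) < norm (t S)"
      by (simp add: t_def norm_dft_twiddle_mult norm_mult)
  qed (use rho_le assms supp in \<open>auto simp: t_def\<close>)
  ultimately show ?thesis
    by simp
qed

lemma correlation_nonzero:
  assumes "\<bar>p\<bar> < int \<rho>"
  shows "dft d (hadamard x (shift d p (vconj x))) q \<noteq> 0"
proof (cases "0 \<le> p")
  case True
  then show ?thesis
    using correlation_nonzero_nonneg_shift[of "nat p"] assms by simp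
next
  case False
  then show ?thesis
    using correlation_nonzero_neg_shift[of "nat (- p)"] assms by simp
qed

end

lemma mu1_pos_if_correlation_nonzero:
  assumes "0 < d" "0 < \<kappa>"
    and "\<And>p q. \<bar>p\<bar> \<le> int \<kappa> - 1 \<Longrightarrow> q < d \<Longrightarrow> dft d (hadamard x (shift d p (vconj x))) q \<noteq> 0"
  shows "mu1 d \<kappa> x > 0"
proof -
  let ?M = "{norm (dft d (hadamard x (shift d p (vconj x))) q) | p q. \<bar>p\<bar> \<le> int \<kappa> - 1 \<and> q < d}"
  have "finite {p :: int. \<bar>p\<bar> \<le> int \<kappa> - 1}"
    by (rule finite_subset[of _ "{- int \<kappa>..int \<kappa>}"]) auto
  then have "finite ?M"
    by (intro finite_image_set2) auto
  moreover have "norm (dft d (hadamard x (shift d 0 (vconj x))) 0) \<in> ?M"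
    using assms(1,2) by force
  ultimately show ?thesis
    unfolding mu1_def using assms(3) by (subst Min_gr_iff) auto
qed

theorem mainTheorem8:
  fixes d \<rho> \<kappa> :: nat and m :: "nat \<Rightarrow> complex" and a \<theta> :: "nat \<Rightarrow> real"
  assumes supp: "\<forall>j. \<rho> \<le> j \<and> j < d \<longrightarrow> dft d m j = 0"
    and rho_lt: "2 * \<rho> < d"
    and polar: "\<forall>j<\<rho>. dft d m j = complex_of_real (a j) * exp (\<i> * complex_of_real (\<theta> j))"
    and kappa: "2 \<le> \<kappa>" "\<kappa> \<le> \<rho>"
    and dom: "\<bar>a 0\<bar> > (real \<rho> - 1) * \<bar>a 1\<bar>"
    and decr: "\<forall>j. 1 \<le> j \<and> j + 1 < \<rho> \<longrightarrow> \<bar>a j\<bar> \<ge> \<bar>a (j + 1)\<bar>"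
    and last_pos: "\<bar>a (\<rho> - 1)\<bar> > 0"
  shows "mu1 d \<kappa> (dft d m) > 0"
proof -
  have norm_m: "norm (dft d m j) = \<bar>a j\<bar>" if "j < \<rho>" for j
    using polar that by (simp add: norm_mult)
  have a1_le_a0: "\<bar>a 1\<bar> \<le> \<bar>a 0\<bar>"
    using dom kappa mult_right_mono[of 1 "real \<rho> - 1" "\<bar>a 1\<bar>"] by simp
  have antimono: "\<bar>a j\<bar> \<le> \<bar>a i\<bar>" if "i \<le> j" "j < \<rho>" for i j
    using that
  proof (induction j rule: dec_induct)
    case (step n)
    have "\<bar>a (Suc n)\<bar> \<le> \<bar>a n\<bar>"
      using decr a1_le_a0 step.prems by (cases "n = 0") auto
    then show ?case
      using step by simp
  qed simp
  have "dft d m j \<noteq> 0" if "j < \<rho>" for j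
    using antimono[of j "\<rho> - 1"] last_pos norm_m[OF that] that by fastforce
  then show ?thesis
    using rho_lt supp kappa dom antimono norm_m
    by (intro mu1_pos_if_correlation_nonzero correlation_nonzero[of \<rho> d]) (auto simp: of_nat_diff)
qed

end
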